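(* Let $U=U_kV_k\cdots U_1V_1U_0$ be a product of unitaries alternating between incoherent unitaries $U_i$ and (generalised controlled) Hadamards $V_i$. Then for any state $|\psi\rangle$ the coherence rank satisfies $\dfrac{\chi(|\psi\rangle)}{2^k}\le \chi(U|\psi\rangle)\le 2^k\chi(|\psi\rangle)$.
   Context: The coherence rank $\chi(|\psi\rangle)$ of a pure state is the minimum number of terms needed to write it as a linear combination of computational basis states. A unitary is incoherent if it has the form $\sum_x e^{i\theta_x}|\pi(x)\rangle\langle x|$ for real $\theta_x$ and a permutation $\pi$. A generalised controlled Hadamard is $\sum_{x\in S}|x\rangle\langle x|\otimes H+\sum_{y\in S^c}|y\rangle\langle y|\otimes I$ for a subset $S$ of bitstrings (this includes a plain Hadamard on one qubit). *)

theory Defs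
  imports Complex_Main "HOL-Combinatorics.Permutations"
begin

text \<open>Computational basis states are indexed by the bitstrings
  encoded as naturals x < 2^n (bit j of x = value of qubit j). A state is a function
  nat => complex vanishing outside {..<2^n}; an operator is a matrix nat => nat => complex
  (entry A y x = <y|A|x>).\<close>

type_synonym qstate = "nat \<Rightarrow> complex"
type_synonym qop = "nat \<Rightarrow> nat \<Rightarrow> complex"

definition is_state :: "nat \<Rightarrow> qstate \<Rightarrow> bool" where
  "is_state n \<psi> \<longleftrightarrow> (\<forall>x. x \<ge> 2^n \<longrightarrow> \<psi> x = 0) \<and> (\<Sum>x<2^n. (cmod (\<psi> x))\<^sup>2) = 1"

definition apply_op :: "nat \<Rightarrow> qop \<Rightarrow> qstate \<Rightarrow> qstate" where
  "apply_op n A \<psi> = (\<lambda>y. if y < 2^n then (\<Sum>x<2^n. A y x * \<psi> x) else 0)"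

definition coh_rank :: "nat \<Rightarrow> qstate \<Rightarrow> nat" where
  "coh_rank n \<psi> = (LEAST k. \<exists>T c. T \<subseteq> {..<2^n} \<and> card T = k \<and>
       (\<forall>y<2^n. \<psi> y = (\<Sum>x\<in>T. c x * (if y = x then 1 else 0))))"

definition incoherent :: "nat \<Rightarrow> qop \<Rightarrow> bool" where
  "incoherent n A \<longleftrightarrow> (\<exists>\<pi> \<theta>. \<pi> permutes {..<2^n} \<and>
      (\<forall>y x. A y x = (if x < 2^n \<and> y = \<pi> x then cis (\<theta> x) else 0)))"

text \<open>Generalised controlled Hadamard with target qubit t and control set S: on basis
  states whose other qubits (i.e. x with bit t cleared) lie in S, apply H to qubit t;
  otherwise act as identity. S = everything gives a plain Hadamard on qubit t.\<close>
definition gen_ch_mat :: "nat \<Rightarrow> nat \<Rightarrow> nat set \<Rightarrow> qop" where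
  "gen_ch_mat n t S = (\<lambda>y x.
     if x < 2^n \<and> y < 2^n then
       (if unset_bit t x \<in> S then
          (if unset_bit t y = unset_bit t x then
             (if bit x t \<and> bit y t then - 1 else 1) / complex_of_real (sqrt 2)
           else 0)
        else (if y = x then 1 else 0))
     else 0)"

definition gen_ch :: "nat \<Rightarrow> qop \<Rightarrow> bool" where
  "gen_ch n V \<longleftrightarrow> (\<exists>t S. t < n \<and> V = gen_ch_mat n t S)"

text \<open>Circuit U = U_k V_k ... U_1 V_1 U_0 given Us = [U_0,...,U_k], Vs = [V_1,...,V_k].\<close>
fun run_circ :: "nat \<Rightarrow> qop list \<Rightarrow> qop list \<Rightarrow> qstate \<Rightarrow> qstate" where
  "run_circ n [] Vs \<psi> = \<psi>"
| "run_circ n [U] Vs \<psi> = apply_op n U \<psi>"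
| "run_circ n (U # U' # Us) [] \<psi> = apply_op n U \<psi>"
| "run_circ n (U # U' # Us) (V # Vs) \<psi> = run_circ n (U' # Us) Vs (apply_op n V (apply_op n U \<psi>))"

end

theory Submission
  imports Defs
begin

text \<open>The coherence rank of a state is the size of its support in the computational basis.
  An incoherent unitary permutes the basis up to phases, so it maps the support bijectively.
  A generalised controlled Hadamard with target qubit t only mixes the amplitudes of x and
  x with bit t flipped, so it at most doubles the support; being an involution, it also at
  most halves it. Induction along the circuit gives the factor 2^k in both directions.\<close>

definition supp :: "nat \<Rightarrow> qstate \<Rightarrow> nat set" where
  "supp n \<phi> = {x. x < 2^n \<and> \<phi> x \<noteq> 0}"

lemma finite_supp [simp]: "finite (supp n \<phi>)"
  by (rule finite_subset[of _ "{..<2^n}"]) (auto simp: supp_def)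

lemma sum_basis_expansion:
  assumes "finite T"
  shows "(\<Sum>x\<in>T. c x * (if y = x then 1 else 0)) = (if y \<in> T then c y else (0::complex))"
  using assms by (simp add: if_distrib[of "(*) _"] sum.delta cong: if_cong)

lemma coh_rank_eq_card_supp: "coh_rank n \<phi> = card (supp n \<phi>)"
  unfolding coh_rank_def
proof (rule Least_equality)
  show "\<exists>T c. T \<subseteq> {..<2^n} \<and> card T = card (supp n \<phi>) \<and>
      (\<forall>y<2^n. \<phi> y = (\<Sum>x\<in>T. c x * (if y = x then 1 else 0)))"
    by (rule exI[of _ "supp n \<phi>"], rule exI[of _ \<phi>]) (auto simp: sum_basis_expansion supp_def)
next
  fix k assume "\<exists>T c. T \<subseteq> {..<2^n} \<and> card T = k \<and>
      (\<forall>y<2^n. \<phi> y = (\<Sum>x\<in>T. c x * (if y = x then 1 else 0)))"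
  then obtain T c where T: "T \<subseteq> {..<2^n}" "card T = k"
    and expansion: "\<forall>y<2^n. \<phi> y = (\<Sum>x\<in>T. c x * (if y = x then 1 else 0))"
    by blast
  have "finite T" using T(1) finite_subset by blast
  moreover have "supp n \<phi> \<subseteq> T"
    using expansion sum_basis_expansion[OF \<open>finite T\<close>] by (auto simp: supp_def split: if_splits)
  ultimately show "card (supp n \<phi>) \<le> k" using card_mono T(2) by blast
qed

lemma supp_apply_op_subset:
  "supp n (apply_op n A \<phi>) \<subseteq> {y. \<exists>x\<in>supp n \<phi>. A y x \<noteq> 0}"
proof
  fix y assume "y \<in> supp n (apply_op n A \<phi>)"
  then have "(\<Sum>x<2^n. A y x * \<phi> x) \<noteq> 0" by (simp add: supp_def apply_op_def split: if_splits)
  then obtain x where "x < 2^n" "A y x * \<phi> x \<noteq> 0" by (meson lessThan_iff sum.neutral)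
  then show "y \<in> {y. \<exists>x\<in>supp n \<phi>. A y x \<noteq> 0}" by (auto simp: supp_def)
qed

lemma apply_op_eq_row_sum:
  assumes "y < 2^n" and "X \<subseteq> {..<2^n}" and "\<And>x. x < 2^n \<Longrightarrow> x \<notin> X \<Longrightarrow> A y x = 0"
  shows "apply_op n A \<phi> y = (\<Sum>x\<in>X. A y x * \<phi> x)"
proof -
  have "(\<Sum>x<2^n. A y x * \<phi> x) = (\<Sum>x\<in>X. A y x * \<phi> x)"
    by (rule sum.mono_neutral_right) (use assms in auto)
  then show ?thesis using assms(1) by (simp add: apply_op_def)
qed

lemma card_supp_apply_incoherent:
  assumes "incoherent n U"
  shows "card (supp n (apply_op n U \<phi>)) = card (supp n \<phi>)"
proof -
  obtain \<pi> \<theta> where \<pi>: "\<pi> permutes {..<2^n}"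
    and U: "\<And>y x. U y x = (if x < 2^n \<and> y = \<pi> x then cis (\<theta> x) else 0)"
    using assms unfolding incoherent_def by blast
  have "inj \<pi>" using \<pi> permutes_inj by blast
  have \<pi>_range: "\<pi> x < 2^n \<longleftrightarrow> x < 2^n" for x
    using \<pi> by (metis lessThan_iff permutes_in_image)
  have apply_U: "apply_op n U \<phi> (\<pi> x) = cis (\<theta> x) * \<phi> x" if "x < 2^n" for x
  proof -
    have "apply_op n U \<phi> (\<pi> x) = (\<Sum>x'\<in>{x}. U (\<pi> x) x' * \<phi> x')"
      by (rule apply_op_eq_row_sum) (use that \<pi>_range injD[OF \<open>inj \<pi>\<close>] in \<open>auto simp: U\<close>)
    then show ?thesis using that by (simp add: U)
  qed
  have "supp n (apply_op n U \<phi>) = \<pi> ` supp n \<phi>"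
  proof (intro equalityI subsetI)
    fix y assume y: "y \<in> supp n (apply_op n U \<phi>)"
    then have "y \<in> \<pi> ` {..<2^n}" using permutes_image[OF \<pi>] by (simp add: supp_def)
    then obtain x where "x < 2^n" "y = \<pi> x" by auto
    then show "y \<in> \<pi> ` supp n \<phi>" using y apply_U by (auto simp: supp_def)
  qed (auto simp: supp_def apply_U \<pi>_range)
  then show ?thesis using \<open>inj \<pi>\<close> by (simp add: card_image inj_on_subset)
qed

lemma flip_bit_less_power:
  fixes y :: nat
  assumes "y < 2^n" and "t < n"
  shows "flip_bit t y < 2^n"
  using assms by (metis take_bit_flip_bit_eq take_bit_nat_eq_self_iff not_le)

lemma flip_bit_flip_bit [simp]: "flip_bit t (flip_bit t y) = (y::nat)"
  by (rule bit_eqI) (auto simp: bit_flip_bit_iff)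

lemma flip_bit_neq [simp]: "flip_bit t y \<noteq> (y::nat)"
  by (metis bit_flip_bit_iff possible_bit_nat)

lemma unset_bit_flip_bit [simp]: "unset_bit t (flip_bit t y) = unset_bit t (y::nat)"
  by (rule bit_eqI) (auto simp: bit_flip_bit_iff bit_unset_bit_iff)

lemma unset_bit_eq_iff:
  "unset_bit t x = unset_bit t y \<longleftrightarrow> x = y \<or> x = flip_bit t (y::nat)"
proof
  assume eq: "unset_bit t x = unset_bit t y"
  have same: "bit x m = bit y m" if "m \<noteq> t" for m
    using arg_cong[OF eq, of "\<lambda>z. bit z m"] that by (simp add: bit_unset_bit_iff)
  show "x = y \<or> x = flip_bit t y"
  proof (cases "bit x t = bit y t")
    case True
    then have "x = y" by (intro bit_eqI) (metis same)
    then show ?thesis ..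
  next
    case False
    then have "x = flip_bit t y" by (intro bit_eqI) (metis same bit_flip_bit_iff possible_bit_nat)
    then show ?thesis ..
  qed
qed auto

lemma gen_ch_mat_eq_0:
  "x \<notin> {y, flip_bit t y} \<Longrightarrow> gen_ch_mat n t S y x = 0"
  by (auto simp: gen_ch_mat_def unset_bit_eq_iff)

lemma supp_apply_gen_ch_subset:
  "supp n (apply_op n (gen_ch_mat n t S) \<phi>) \<subseteq> supp n \<phi> \<union> flip_bit t ` supp n \<phi>"
proof
  fix y assume "y \<in> supp n (apply_op n (gen_ch_mat n t S) \<phi>)"
  then obtain x where x: "x \<in> supp n \<phi>" and "gen_ch_mat n t S y x \<noteq> 0"
    using supp_apply_op_subset by blast
  then have "x = y \<or> x = flip_bit t y" using gen_ch_mat_eq_0 by blast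
  then show "y \<in> supp n \<phi> \<union> flip_bit t ` supp n \<phi>"
    using x by (metis UnI1 UnI2 flip_bit_flip_bit imageI)
qed

lemma card_supp_apply_gen_ch_le:
  "card (supp n (apply_op n (gen_ch_mat n t S) \<phi>)) \<le> 2 * card (supp n \<phi>)"
proof -
  have "card (supp n (apply_op n (gen_ch_mat n t S) \<phi>)) \<le> card (supp n \<phi> \<union> flip_bit t ` supp n \<phi>)"
    by (rule card_mono[OF _ supp_apply_gen_ch_subset]) simp
  also have "\<dots> \<le> card (supp n \<phi>) + card (flip_bit t ` supp n \<phi>)" by (rule card_Un_le)
  also have "\<dots> \<le> 2 * card (supp n \<phi>)" using card_image_le[of "supp n \<phi>" "flip_bit t"] by simp
  finally show ?thesis .
qed

lemma apply_gen_ch: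
  assumes "t < n" and "y < 2^n"
  shows "apply_op n (gen_ch_mat n t S) \<phi> y =
    (if unset_bit t y \<in> S
     then ((if bit y t then - 1 else 1) * \<phi> y + \<phi> (flip_bit t y)) / complex_of_real (sqrt 2)
     else \<phi> y)"
proof -
  let ?y' = "flip_bit t y"
  have "?y' < 2^n" by (rule flip_bit_less_power[OF assms(2,1)])
  have diagonal: "gen_ch_mat n t S y y =
      (if unset_bit t y \<in> S then (if bit y t then - 1 else 1) / complex_of_real (sqrt 2) else 1)"
    using assms(2) by (simp add: gen_ch_mat_def)
  have off_diagonal: "gen_ch_mat n t S y ?y' =
      (if unset_bit t y \<in> S then 1 / complex_of_real (sqrt 2) else 0)"
    using assms(2) \<open>?y' < 2^n\<close> flip_bit_neq[of t y, symmetric] by (simp add: gen_ch_mat_def bit_flip_bit_iff)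
  have "apply_op n (gen_ch_mat n t S) \<phi> y = (\<Sum>x\<in>{y, ?y'}. gen_ch_mat n t S y x * \<phi> x)"
    by (rule apply_op_eq_row_sum) (use assms \<open>?y' < 2^n\<close> gen_ch_mat_eq_0 in auto)
  also have "\<dots> = gen_ch_mat n t S y y * \<phi> y + gen_ch_mat n t S y ?y' * \<phi> ?y'"
    by (simp add: flip_bit_neq[symmetric])
  finally show ?thesis by (simp add: diagonal off_diagonal add_divide_distrib)
qed

lemma apply_gen_ch_involutive:
  assumes "t < n" and "y < 2^n"
  shows "apply_op n (gen_ch_mat n t S) (apply_op n (gen_ch_mat n t S) \<phi>) y = \<phi> y"
proof (cases "unset_bit t y \<in> S")
  case True
  let ?V = "apply_op n (gen_ch_mat n t S)" and ?y' = "flip_bit t y"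
  define c where "c = inverse (complex_of_real (sqrt 2))"
  define \<sigma> :: complex where "\<sigma> = (if bit y t then - 1 else 1)"
  have "c * c * 2 = 1" unfolding c_def by (simp flip: of_real_mult inverse_mult_distrib)
  have "\<sigma> * \<sigma> = 1" by (simp add: \<sigma>_def)
  have "?y' < 2^n" by (rule flip_bit_less_power[OF assms(2,1)])
  have "?V \<phi> y = (\<sigma> * \<phi> y + \<phi> ?y') * c"
    using apply_gen_ch[OF assms] True by (simp add: c_def \<sigma>_def divide_inverse)
  moreover have "?V \<phi> ?y' = (- \<sigma> * \<phi> ?y' + \<phi> y) * c"
    using apply_gen_ch[OF assms(1) \<open>?y' < 2^n\<close>] True
    by (simp add: c_def \<sigma>_def divide_inverse bit_flip_bit_iff)
  moreover have "?V (?V \<phi>) y = (\<sigma> * ?V \<phi> y + ?V \<phi> ?y') * c"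
    using apply_gen_ch[OF assms] True by (simp add: c_def \<sigma>_def divide_inverse)
  ultimately have "?V (?V \<phi>) y = \<phi> y * (\<sigma> * \<sigma> + 1) * c * c"
    by (simp add: algebra_simps)
  also have "\<dots> = \<phi> y * (c * c * 2)"
    using \<open>\<sigma> * \<sigma> = 1\<close> by (simp add: algebra_simps)
  finally show ?thesis using \<open>c * c * 2 = 1\<close> by simp
next
  case False
  then show ?thesis using apply_gen_ch[OF assms] by simp
qed

lemma card_supp_le_apply_gen_ch:
  assumes "t < n"
  shows "card (supp n \<phi>) \<le> 2 * card (supp n (apply_op n (gen_ch_mat n t S) \<phi>))"
proof -
  have "supp n (apply_op n (gen_ch_mat n t S) (apply_op n (gen_ch_mat n t S) \<phi>)) = supp n \<phi>"
    using apply_gen_ch_involutive[OF assms] by (auto simp: supp_def)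
  then show ?thesis
    using card_supp_apply_gen_ch_le[of n t S "apply_op n (gen_ch_mat n t S) \<phi>"] by simp
qed

lemma card_supp_apply_gen_ch_bounds:
  assumes "gen_ch n V"
  shows "card (supp n (apply_op n V \<phi>)) \<le> 2 * card (supp n \<phi>)"
    and "card (supp n \<phi>) \<le> 2 * card (supp n (apply_op n V \<phi>))"
  using assms card_supp_apply_gen_ch_le card_supp_le_apply_gen_ch unfolding gen_ch_def by blast+

lemma card_supp_run_circ_bounds:
  assumes "length Us = length Vs + 1"
    and "\<forall>U\<in>set Us. incoherent n U" and "\<forall>V\<in>set Vs. gen_ch n V"
  shows "card (supp n (run_circ n Us Vs \<psi>)) \<le> 2 ^ length Vs * card (supp n \<psi>)
    \<and> card (supp n \<psi>) \<le> 2 ^ length Vs * card (supp n (run_circ n Us Vs \<psi>))"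
  using assms
proof (induction Vs arbitrary: Us \<psi>)
  case Nil
  then obtain U where "Us = [U]" by (cases Us) auto
  then show ?case using Nil card_supp_apply_incoherent[of n U \<psi>] by simp
next
  case (Cons V Vs)
  then obtain U U' Us' where Us: "Us = U # U' # Us'"
    by (cases Us; cases "tl Us") auto
  define \<phi> where "\<phi> = apply_op n V (apply_op n U \<psi>)"
  let ?r = "card (supp n (run_circ n (U' # Us') Vs \<phi>))"
  have "gen_ch n V" and "incoherent n U" using Cons.prems Us by auto
  then have up: "card (supp n \<phi>) \<le> 2 * card (supp n \<psi>)"
    and down: "card (supp n \<psi>) \<le> 2 * card (supp n \<phi>)"
    using card_supp_apply_gen_ch_bounds card_supp_apply_incoherent unfolding \<phi>_def by metis+
  have IH: "?r \<le> 2 ^ length Vs * card (supp n \<phi>) \<and> card (supp n \<phi>) \<le> 2 ^ length Vs * ?r"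
    using Cons.IH[of "U' # Us'" \<phi>] Cons.prems Us by simp
  have "?r \<le> 2 ^ length Vs * (2 * card (supp n \<psi>))"
    using IH up by (meson le_trans mult_le_mono2)
  moreover have "card (supp n \<psi>) \<le> 2 * (2 ^ length Vs * ?r)"
    using IH down by (meson le_trans mult_le_mono2)
  moreover have "run_circ n Us (V # Vs) \<psi> = run_circ n (U' # Us') Vs \<phi>"
    using Us \<phi>_def by simp
  ultimately show ?case by (simp add: mult.assoc mult.left_commute)
qed

theorem lemma2:
  fixes n k :: nat and Us Vs :: "qop list" and \<psi> :: qstate
  assumes "length Us = k + 1" and "length Vs = k"
    and "\<forall>U\<in>set Us. incoherent n U"
    and "\<forall>V\<in>set Vs. gen_ch n V"
    and "is_state n \<psi>"
  shows "real (coh_rank n \<psi>) / 2^k \<le> real (coh_rank n (run_circ n Us Vs \<psi>))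
       \<and> real (coh_rank n (run_circ n Us Vs \<psi>)) \<le> 2^k * real (coh_rank n \<psi>)"
proof -
  let ?a = "card (supp n \<psi>)" and ?b = "card (supp n (run_circ n Us Vs \<psi>))"
  have "?b \<le> 2^k * ?a" and "?a \<le> 2^k * ?b"
    using card_supp_run_circ_bounds[of Us Vs n \<psi>] assms by simp_all
  then have "real ?b \<le> real (2^k * ?a)" and "real ?a \<le> real (2^k * ?b)"
    by (simp_all only: of_nat_le_iff)
  then have "real ?b \<le> 2^k * real ?a" and "real ?a \<le> 2^k * real ?b"
    by simp_all
  moreover from this(2) have "real ?a / 2^k \<le> real ?b"
    by (simp add: divide_le_eq mult.commute)
  ultimately show ?thesis by (simp add: coh_rank_eq_card_supp)
qed

end
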